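(* Let $\pi$ be a measure on $\mathcal Y$ (extended by zero to $\mathbb Z$). The following are equivalent: (1) $\pi$ is a stationary measure (resp. stationary distribution) of $Y_t$ on $\mathcal Y$. (2) $\pi$ is a non-negative measure (resp. probability distribution) on $\mathcal Y$ such that for every $x\in\mathbb N_0$, $$\sum_{\omega\in\Omega_-}\ \sum_{j=\omega\omega_*^{-1}+1}^{0}\lambda_\omega(x-j\omega_* )\pi(x-j\omega_* )=\sum_{\omega\in\Omega_+}\ \sum_{j=1}^{\omega\omega_*^{-1}}\lambda_\omega(x-j\omega_* )\pi(x-j\omega_* )<\infty .$$ (3) $\pi$ is a non-negative measure (resp. probability distribution) on $\mathcal Y$ such that for every $x\in\mathbb N_0$, $$\sum_{j=\omega_-+1}^{0}\pi(x-j\omega_* )\sum_{\omega\in A_j}\lambda_\omega(x-j\omega_* )=\sum_{j=1}^{\omega_+}\pi(x-j\omega_* )\sum_{\omega\in A_j}\lambda_\omega(x-j\omega_* )<\infty .$$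
   Context: Let $(Y_t)_{t\ge0}$ be a minimal continuous-time Markov chain on a state space $\mathcal Y\subseteq\mathbb N_0$ with transition rate matrix $Q=(q_{x,y})_{x,y\in\mathcal Y}$ with finite entries. Let $\Omega=\{y-x: q_{x,y}>0\text{ for some }x,y\in\mathcal Y\}$ and $\lambda_\omega(x)=q_{x,x+\omega}$ for $x\in\mathcal Y$, $\omega\in\Omega$. Convention: functions defined on $\mathcal Y$ (such as $\lambda_\omega$ and measures $\pi$) are set to $0$ at points of $\mathbb Z\setminus\mathcal Y$. Let $\Omega_+=\{\omega\in\Omega:\omega>0\}$, $\Omega_-=\{\omega\in\Omega:\omega<0\}$, $\omega_*=\gcd(\Omega)>0$, $\omega_+=\max_{\omega\in\Omega_+}\omega/\omega_*$, $\omega_-=\min_{\omega\in\Omega_-}\omega/\omega_*$ (with $\max\varnothing=-\infty$, $\min\varnothing=+\infty$, and max/min equal to $\pm\infty$ if unbounded). For integers $j$ with $\omega_-\le j\le\omega_++1$ let $A_j=\{\omega\in\Omega_-: j\omega_*>\omega\}$ if $j\le0$ and $A_j=\{\omega\in\Omega_+: j\omega_*\le\omega\}$ if $j\ge1$. A stationary measure of $Y_t$ is a non-negative measure $\pi$ on $\mathcal Y$ satisfying the master equation $0=\sum_{\omega\in\Omega}\lambda_\omega(x-\omega)\pi(x-\omega)-\sum_{\omega\in\Omega}\lambda_\omega(x)\pi(x)$ for all $x\in\mathcal Y$; a stationary distribution is a stationary measure that is a probability measure. *)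

theory Defs
  imports "HOL-Analysis.Analysis"
begin

text \<open>States are integers; the state space Y is a subset of the non-negative integers.
  The rate matrix is q :: int => int => real, only its entries on Y x Y matter.\<close>

definition is_rate_matrix :: "int set \<Rightarrow> (int \<Rightarrow> int \<Rightarrow> real) \<Rightarrow> bool" where
  "is_rate_matrix Y q \<longleftrightarrow>
     (\<forall>x\<in>Y. \<forall>y\<in>Y. x \<noteq> y \<longrightarrow> 0 \<le> q x y) \<and>
     (\<forall>x\<in>Y. (q x) summable_on (Y - {x}) \<and> q x x = - (\<Sum>\<^sub>\<infinity>y\<in>Y - {x}. q x y))"

definition Omega :: "int set \<Rightarrow> (int \<Rightarrow> int \<Rightarrow> real) \<Rightarrow> int set" where
  "Omega Y q = {y - x | x y. x \<in> Y \<and> y \<in> Y \<and> q x y > 0}"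

definition Omega_plus :: "int set \<Rightarrow> (int \<Rightarrow> int \<Rightarrow> real) \<Rightarrow> int set" where
  "Omega_plus Y q = {\<omega> \<in> Omega Y q. \<omega> > 0}"

definition Omega_minus :: "int set \<Rightarrow> (int \<Rightarrow> int \<Rightarrow> real) \<Rightarrow> int set" where
  "Omega_minus Y q = {\<omega> \<in> Omega Y q. \<omega> < 0}"

definition lam :: "int set \<Rightarrow> (int \<Rightarrow> int \<Rightarrow> real) \<Rightarrow> int \<Rightarrow> int \<Rightarrow> real" where
  "lam Y q \<omega> x = (if x \<in> Y \<and> x + \<omega> \<in> Y then q x (x + \<omega>) else 0)"

definition omega_star :: "int set \<Rightarrow> (int \<Rightarrow> int \<Rightarrow> real) \<Rightarrow> int" where
  "omega_star Y q = Gcd (Omega Y q)"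

text \<open>omega_+ and omega_- as extended reals: Sup {} = -infinity, Inf {} = +infinity,
  and unbounded sets give +/- infinity.\<close>
definition omega_plus :: "int set \<Rightarrow> (int \<Rightarrow> int \<Rightarrow> real) \<Rightarrow> ereal" where
  "omega_plus Y q = (SUP \<omega>\<in>Omega_plus Y q. ereal (of_int \<omega> / of_int (omega_star Y q)))"

definition omega_minus :: "int set \<Rightarrow> (int \<Rightarrow> int \<Rightarrow> real) \<Rightarrow> ereal" where
  "omega_minus Y q = (INF \<omega>\<in>Omega_minus Y q. ereal (of_int \<omega> / of_int (omega_star Y q)))"

definition A_set :: "int set \<Rightarrow> (int \<Rightarrow> int \<Rightarrow> real) \<Rightarrow> int \<Rightarrow> int set" where
  "A_set Y q j = (if j \<le> 0 then {\<omega> \<in> Omega_minus Y q. j * omega_star Y q > \<omega>}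
                  else {\<omega> \<in> Omega_plus Y q. j * omega_star Y q \<le> \<omega>})"

definition nonneg_measure_on :: "int set \<Rightarrow> (int \<Rightarrow> real) \<Rightarrow> bool" where
  "nonneg_measure_on Y \<pi> \<longleftrightarrow> (\<forall>x. 0 \<le> \<pi> x) \<and> (\<forall>x. x \<notin> Y \<longrightarrow> \<pi> x = 0)"

definition prob_on :: "int set \<Rightarrow> (int \<Rightarrow> real) \<Rightarrow> bool" where
  "prob_on Y \<pi> \<longleftrightarrow> nonneg_measure_on Y \<pi> \<and> (\<Sum>\<^sub>\<infinity>x\<in>Y. ennreal (\<pi> x)) = 1"

text \<open>Master equation: inflow = outflow at every state of Y (sums of non-negative
  terms, taken in the extended non-negative reals; outflow is finite for a rate matrix).\<close>
definition stationary_measure :: "int set \<Rightarrow> (int \<Rightarrow> int \<Rightarrow> real) \<Rightarrow> (int \<Rightarrow> real) \<Rightarrow> bool" where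
  "stationary_measure Y q \<pi> \<longleftrightarrow> nonneg_measure_on Y \<pi> \<and>
     (\<forall>x\<in>Y. (\<Sum>\<^sub>\<infinity>\<omega>\<in>Omega Y q. ennreal (lam Y q \<omega> (x - \<omega>) * \<pi> (x - \<omega>)))
           = (\<Sum>\<^sub>\<infinity>\<omega>\<in>Omega Y q. ennreal (lam Y q \<omega> x * \<pi> x)))"

definition stationary_distribution :: "int set \<Rightarrow> (int \<Rightarrow> int \<Rightarrow> real) \<Rightarrow> (int \<Rightarrow> real) \<Rightarrow> bool" where
  "stationary_distribution Y q \<pi> \<longleftrightarrow> stationary_measure Y q \<pi> \<and> prob_on Y \<pi>"

definition cond2 :: "int set \<Rightarrow> (int \<Rightarrow> int \<Rightarrow> real) \<Rightarrow> (int \<Rightarrow> real) \<Rightarrow> bool" where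
  "cond2 Y q \<pi> \<longleftrightarrow> (\<forall>x::int. 0 \<le> x \<longrightarrow>
     (let s = omega_star Y q;
          L = (\<Sum>\<^sub>\<infinity>\<omega>\<in>Omega_minus Y q. \<Sum>\<^sub>\<infinity>j\<in>{\<omega> div s + 1..0}.
                 ennreal (lam Y q \<omega> (x - j * s) * \<pi> (x - j * s)));
          R = (\<Sum>\<^sub>\<infinity>\<omega>\<in>Omega_plus Y q. \<Sum>\<^sub>\<infinity>j\<in>{1..\<omega> div s}.
                 ennreal (lam Y q \<omega> (x - j * s) * \<pi> (x - j * s)))
      in L = R \<and> R < \<infinity>))"

definition cond3 :: "int set \<Rightarrow> (int \<Rightarrow> int \<Rightarrow> real) \<Rightarrow> (int \<Rightarrow> real) \<Rightarrow> bool" where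
  "cond3 Y q \<pi> \<longleftrightarrow> (\<forall>x::int. 0 \<le> x \<longrightarrow>
     (let s = omega_star Y q;
          L = (\<Sum>\<^sub>\<infinity>j\<in>{j::int. omega_minus Y q < ereal (of_int j) \<and> j \<le> 0}.
                 ennreal (\<pi> (x - j * s)) * (\<Sum>\<^sub>\<infinity>\<omega>\<in>A_set Y q j. ennreal (lam Y q \<omega> (x - j * s))));
          R = (\<Sum>\<^sub>\<infinity>j\<in>{j::int. 1 \<le> j \<and> ereal (of_int j) \<le> omega_plus Y q}.
                 ennreal (\<pi> (x - j * s)) * (\<Sum>\<^sub>\<infinity>\<omega>\<in>A_set Y q j. ennreal (lam Y q \<omega> (x - j * s))))
      in L = R \<and> R < \<infinity>))"

end

theory Submission
  imports Defs
begin

text \<open>All jumps are multiples of \<open>s = \<omega>\<^sub>*\<close>, so inside each residue class \<open>x + s\<int>\<close> one can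
  measure the probability flux across the cut between \<open>x - s\<close> and \<open>x\<close>: upward jumps crossing
  it from below and downward jumps crossing it from above. Going from the cut below \<open>x\<close> to
  the cut above \<open>x\<close>, the upward flux gains the outflow of \<open>x\<close> along positive jumps and loses
  the inflow into \<open>x\<close> along positive jumps, and symmetrically for the downward flux. Hence
  the master equation at \<open>x\<close> holds exactly when the balance of the two fluxes is passed from
  one cut to the next. Below \<open>s\<close> both fluxes vanish, because the states are non-negative, so
  by induction the master equation is equivalent to balance at every cut, which is
  condition (2). Condition (3) is condition (2) with the double sum regrouped by the lattice
  offset \<open>j\<close> instead of the jump \<open>\<omega>\<close>.\<close>

text \<open>The library fact \<open>summable_on_ennreal\<close> is, through a coercion, stated only for
  \<open>enat\<close>-valued functions.\<close>

lemma summable_on_ennreal_any [simp]: "(f :: 'a \<Rightarrow> ennreal) summable_on A"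
  by (rule nonneg_summable_on_complete) simp

lemma infsum_sum_ennreal:
  fixes f :: "'a \<Rightarrow> 'b \<Rightarrow> ennreal"
  shows "(\<Sum>\<^sub>\<infinity>y\<in>B. \<Sum>x\<in>F. f x y) = (\<Sum>x\<in>F. \<Sum>\<^sub>\<infinity>y\<in>B. f x y)"
proof (cases "finite F")
  case True
  then show ?thesis
    by (induction F rule: finite_induct) (simp_all add: infsum_add)
qed simp

lemma infsum_swap_ennreal:
  fixes f :: "'a \<Rightarrow> 'b \<Rightarrow> ennreal"
  shows "(\<Sum>\<^sub>\<infinity>x\<in>A. \<Sum>\<^sub>\<infinity>y\<in>B. f x y) = (\<Sum>\<^sub>\<infinity>y\<in>B. \<Sum>\<^sub>\<infinity>x\<in>A. f x y)"
proof -
  have le: "(\<Sum>\<^sub>\<infinity>x\<in>A. \<Sum>\<^sub>\<infinity>y\<in>B. g x y) \<le> (\<Sum>\<^sub>\<infinity>y\<in>B. \<Sum>\<^sub>\<infinity>x\<in>A. g x y)"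
    for A :: "'c set" and B :: "'d set" and g :: "'c \<Rightarrow> 'd \<Rightarrow> ennreal"
  proof -
    have "(\<Sum>\<^sub>\<infinity>x\<in>A. \<Sum>\<^sub>\<infinity>y\<in>B. g x y) = (SUP F\<in>{F. finite F \<and> F \<subseteq> A}. \<Sum>x\<in>F. \<Sum>\<^sub>\<infinity>y\<in>B. g x y)"
      by (rule nonneg_infsum_complete) simp
    also have "\<dots> \<le> (\<Sum>\<^sub>\<infinity>y\<in>B. \<Sum>\<^sub>\<infinity>x\<in>A. g x y)"
    proof (rule SUP_least, clarify)
      fix F assume F: "finite F" "F \<subseteq> A"
      have "(\<Sum>x\<in>F. g x y) \<le> (\<Sum>\<^sub>\<infinity>x\<in>A. g x y)" for y
        using F infsum_mono_neutral[of "\<lambda>x. g x y" F "\<lambda>x. g x y" A] by auto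
      then show "(\<Sum>x\<in>F. \<Sum>\<^sub>\<infinity>y\<in>B. g x y) \<le> (\<Sum>\<^sub>\<infinity>y\<in>B. \<Sum>\<^sub>\<infinity>x\<in>A. g x y)"
        by (simp add: infsum_sum_ennreal[symmetric] infsum_mono)
    qed
    finally show ?thesis .
  qed
  show ?thesis by (rule antisym) (rule le)+
qed

lemma infsum_swap_dependent_ennreal:
  fixes f :: "'a \<Rightarrow> 'b \<Rightarrow> ennreal"
  assumes "\<And>x y. x \<in> A \<and> y \<in> B x \<longleftrightarrow> y \<in> C \<and> x \<in> D y"
  shows "(\<Sum>\<^sub>\<infinity>x\<in>A. \<Sum>\<^sub>\<infinity>y\<in>B x. f x y) = (\<Sum>\<^sub>\<infinity>y\<in>C. \<Sum>\<^sub>\<infinity>x\<in>D y. f x y)"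
proof -
  let ?g = "\<lambda>x y. if x \<in> A \<and> y \<in> B x then f x y else 0"
  have "(\<Sum>\<^sub>\<infinity>x\<in>A. \<Sum>\<^sub>\<infinity>y\<in>B x. f x y) = (\<Sum>\<^sub>\<infinity>x\<in>A. \<Sum>\<^sub>\<infinity>y\<in>C. ?g x y)"
    by (intro infsum_cong infsum_cong_neutral) (use assms in auto)
  also have "\<dots> = (\<Sum>\<^sub>\<infinity>y\<in>C. \<Sum>\<^sub>\<infinity>x\<in>A. ?g x y)"
    by (rule infsum_swap_ennreal)
  also have "\<dots> = (\<Sum>\<^sub>\<infinity>y\<in>C. \<Sum>\<^sub>\<infinity>x\<in>D y. f x y)"
    by (intro infsum_cong infsum_cong_neutral) (use assms in auto)
  finally show ?thesis .
qed

lemma infsum_cmult_right_ennreal: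
  fixes f :: "'a \<Rightarrow> ennreal"
  assumes "c < \<infinity>"
  shows "(\<Sum>\<^sub>\<infinity>x\<in>A. c * f x) = c * infsum f A"
proof -
  have "(sum f \<longlongrightarrow> infsum f A) (finite_subsets_at_top A)"
    using has_sum_infsum[of f A] by (simp add: has_sum_def)
  then have "((\<lambda>F. c * sum f F) \<longlongrightarrow> c * infsum f A) (finite_subsets_at_top A)"
    using assms by (intro ennreal_tendsto_cmult) simp_all
  then show ?thesis
    by (intro infsumI) (simp add: has_sum_def sum_distrib_left)
qed

lemma infsum_ennreal_of_nonneg:
  fixes f :: "'a \<Rightarrow> real"
  assumes "f summable_on A" "\<And>x. x \<in> A \<Longrightarrow> 0 \<le> f x"
  shows "(\<Sum>\<^sub>\<infinity>x\<in>A. ennreal (f x)) = ennreal (infsum f A)"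
proof -
  have "sum (ennreal \<circ> f) F = ennreal (sum f F)" if "finite F" "F \<subseteq> A" for F
    using that assms(2) by (auto intro!: sum_ennreal)
  then have "ennreal (infsum f A) = infsum (ennreal \<circ> f) A"
    using assms(1) by (simp add: infsum_comm_additive_general)
  then show ?thesis by (simp add: o_def)
qed

lemma sum_int_interval_telescope:
  fixes g :: "int \<Rightarrow> 'a::comm_monoid_add"
  assumes "a \<le> b"
  shows "(\<Sum>j\<in>{a+1..b}. g (j - 1)) + g b = g a + (\<Sum>j\<in>{a+1..b}. g j)"
proof -
  have "(\<Sum>j\<in>{a+1..b}. g (j - 1)) = (\<Sum>j\<in>{a..b-1}. g j)"
    by (rule sum.reindex_bij_witness[of _ "\<lambda>j. j + 1" "\<lambda>j. j - 1"]) auto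
  moreover have "(\<Sum>j\<in>{a..b-1}. g j) + g b = (\<Sum>j\<in>{a..b}. g j)"
  proof -
    have "{a..b} = insert b {a..b-1}" using assms by auto
    then show ?thesis by (simp add: add.commute)
  qed
  moreover have "(\<Sum>j\<in>{a..b}. g j) = g a + (\<Sum>j\<in>{a+1..b}. g j)"
  proof -
    have "{a..b} = insert a {a+1..b}" using assms by auto
    then show ?thesis by simp
  qed
  ultimately show ?thesis by simp
qed

lemma infsum_band_shift:
  fixes g :: "'w \<Rightarrow> int \<Rightarrow> ennreal" and s x :: int
  assumes "\<And>\<omega>. \<omega> \<in> W \<Longrightarrow> lo \<omega> \<le> hi \<omega>"
  shows "(\<Sum>\<^sub>\<infinity>\<omega>\<in>W. \<Sum>\<^sub>\<infinity>j\<in>{lo \<omega> + 1..hi \<omega>}. g \<omega> (x + s - j * s)) + (\<Sum>\<^sub>\<infinity>\<omega>\<in>W. g \<omega> (x - hi \<omega> * s))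
       = (\<Sum>\<^sub>\<infinity>\<omega>\<in>W. g \<omega> (x - lo \<omega> * s)) + (\<Sum>\<^sub>\<infinity>\<omega>\<in>W. \<Sum>\<^sub>\<infinity>j\<in>{lo \<omega> + 1..hi \<omega>}. g \<omega> (x - j * s))"
proof -
  have "(\<Sum>j\<in>{lo \<omega> + 1..hi \<omega>}. g \<omega> (x + s - j * s)) + g \<omega> (x - hi \<omega> * s)
      = g \<omega> (x - lo \<omega> * s) + (\<Sum>j\<in>{lo \<omega> + 1..hi \<omega>}. g \<omega> (x - j * s))" if "\<omega> \<in> W" for \<omega>
    using sum_int_interval_telescope[OF assms[OF that], of "\<lambda>j. g \<omega> (x - j * s)"]
    by (simp add: algebra_simps)
  then show ?thesis
    by (simp add: infsum_add[symmetric] cong: infsum_cong)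
qed

text \<open>Here \<open>r\<close> is the balanced cut flux at \<open>x\<close>, \<open>r'\<close> and \<open>l'\<close> are the upward and downward
  cut fluxes at \<open>x + s\<close>, and \<open>a, b\<close> (\<open>c, d\<close>) are the inflow into (outflow from) \<open>x\<close> along
  positive and negative jumps.\<close>

lemma ennreal_cut_balance:
  fixes a b c d r r' l' :: ennreal
  assumes up: "r' + a = c + r" and down: "l' + d = b + r"
    and fin: "c + d < \<infinity>" "r < \<infinity>"
  shows "a + b = c + d \<longleftrightarrow> l' = r' \<and> r' < \<infinity>"
proof
  assume bal: "a + b = c + d"
  then have "a + b \<noteq> \<infinity>" "c + d \<noteq> \<infinity>"
    using fin(1) by auto
  then have "a \<noteq> \<infinity>" "c \<noteq> \<infinity>" "d \<noteq> \<infinity>"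
    by (auto simp: ennreal_add_eq_top)
  moreover have "r' \<noteq> \<infinity>"
  proof -
    have "c + r \<noteq> \<infinity>" using fin(2) \<open>c \<noteq> \<infinity>\<close> by (simp add: ennreal_add_eq_top)
    then have "r' + a \<noteq> \<infinity>" using up by simp
    then show ?thesis by (simp add: ennreal_add_eq_top)
  qed
  moreover have "(a + d) + l' = (a + d) + r'"
  proof -
    have "(a + d) + l' = c + d + r" using down bal by (metis add.assoc add.commute)
    also have "\<dots> = (a + d) + r'" using up by (metis add.assoc add.commute)
    finally show ?thesis .
  qed
  ultimately show "l' = r' \<and> r' < \<infinity>"
    by (auto simp: ennreal_add_left_cancel less_top ennreal_add_eq_top)
next
  assume "l' = r' \<and> r' < \<infinity>"
  moreover have "r' + (a + b) = r' + (c + d)" if "l' = r'"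
  proof -
    have "r' + (a + b) = c + b + r" using up by (metis add.assoc add.commute)
    also have "\<dots> = r' + (c + d)" using down that by (metis add.assoc add.commute)
    finally show ?thesis .
  qed
  ultimately show "a + b = c + d"
    by (auto simp: ennreal_add_left_cancel)
qed

locale chain_measure =
  fixes Y :: "int set" and q :: "int \<Rightarrow> int \<Rightarrow> real" and \<pi> :: "int \<Rightarrow> real"
  assumes state_space_nonneg: "Y \<subseteq> {0..}"
    and rate_matrix: "is_rate_matrix Y q"
    and Omega_nonempty: "Omega Y q \<noteq> {}"
    and nonneg_measure: "nonneg_measure_on Y \<pi>"
begin

abbreviation "s \<equiv> omega_star Y q"
abbreviation "\<Omega> \<equiv> Omega Y q"
abbreviation "\<Omega>pos \<equiv> Omega_plus Y q"
abbreviation "\<Omega>neg \<equiv> Omega_minus Y q"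

definition flux :: "int \<Rightarrow> int \<Rightarrow> ennreal" where
  "flux \<omega> y = ennreal (lam Y q \<omega> y * \<pi> y)"

definition inflow :: "int \<Rightarrow> ennreal" where
  "inflow x = (\<Sum>\<^sub>\<infinity>\<omega>\<in>\<Omega>. flux \<omega> (x - \<omega>))"

definition outflow :: "int \<Rightarrow> ennreal" where
  "outflow x = (\<Sum>\<^sub>\<infinity>\<omega>\<in>\<Omega>. flux \<omega> x)"

text \<open>\<open>up_flux x\<close> collects the jumps \<open>y \<rightarrow> y + \<omega>\<close> with \<open>y = x - j s \<le> x - s\<close> and
  \<open>y + \<omega> \<ge> x\<close>; \<open>down_flux x\<close> those with \<open>y \<ge> x\<close> and \<open>y + \<omega> \<le> x - s\<close>.\<close>

definition up_flux :: "int \<Rightarrow> ennreal" where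
  "up_flux x = (\<Sum>\<^sub>\<infinity>\<omega>\<in>\<Omega>pos. \<Sum>\<^sub>\<infinity>j\<in>{1..\<omega> div s}. flux \<omega> (x - j * s))"

definition down_flux :: "int \<Rightarrow> ennreal" where
  "down_flux x = (\<Sum>\<^sub>\<infinity>\<omega>\<in>\<Omega>neg. \<Sum>\<^sub>\<infinity>j\<in>{\<omega> div s + 1..0}. flux \<omega> (x - j * s))"

definition cut_balanced :: "int \<Rightarrow> bool" where
  "cut_balanced x \<longleftrightarrow> down_flux x = up_flux x \<and> up_flux x < \<infinity>"

lemma pi_nonneg: "0 \<le> \<pi> y"
  using nonneg_measure by (simp add: nonneg_measure_on_def)

lemma zero_notin_Omega: "0 \<notin> \<Omega>"
proof
  assume "0 \<in> \<Omega>"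
  then obtain x where x: "x \<in> Y" "q x x > 0"
    unfolding Omega_def by auto
  have "(\<Sum>\<^sub>\<infinity>y\<in>Y - {x}. q x y) \<ge> 0"
    by (rule infsum_nonneg) (use rate_matrix x in \<open>auto simp: is_rate_matrix_def\<close>)
  moreover have "q x x = - (\<Sum>\<^sub>\<infinity>y\<in>Y - {x}. q x y)"
    using rate_matrix x by (simp add: is_rate_matrix_def)
  ultimately show False
    using x by simp
qed

lemma omega_star_pos: "s > 0"
proof -
  have "s \<noteq> 0"
    unfolding omega_star_def using Omega_nonempty zero_notin_Omega
    by (metis Gcd_0_iff ex_in_conv insertE subsetD subset_singletonD)
  then show ?thesis
    unfolding omega_star_def by (simp add: order_less_le)
qed

lemma div_omega_star_mult: "\<omega> \<in> \<Omega> \<Longrightarrow> \<omega> div s * s = \<omega>"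
  unfolding omega_star_def by (simp add: Gcd_dvd)

lemma Omega_plus_minus: "\<Omega> = \<Omega>pos \<union> \<Omega>neg" "\<Omega>pos \<inter> \<Omega>neg = {}"
  using zero_notin_Omega unfolding Omega_plus_def Omega_minus_def
  by (auto simp: neq_iff) (metis linorder_neqE_linordered_idom)

lemma flux_eq_0: "y \<notin> Y \<or> y + \<omega> \<notin> Y \<Longrightarrow> flux \<omega> y = 0"
  unfolding flux_def lam_def by auto

lemma flux_eq_0_neg: "y < 0 \<or> y + \<omega> < 0 \<Longrightarrow> flux \<omega> y = 0"
  using state_space_nonneg by (intro flux_eq_0) auto

lemma stationary_measure_iff_balance: "stationary_measure Y q \<pi> \<longleftrightarrow> (\<forall>x. inflow x = outflow x)"
proof -
  have "inflow x = outflow x" if "x \<notin> Y" for x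
    using that unfolding inflow_def outflow_def
    by (simp add: flux_eq_0 infsum_0)
  then show ?thesis
    using nonneg_measure unfolding stationary_measure_def inflow_def outflow_def flux_def by blast
qed

lemma cond2_iff_cut_balanced: "cond2 Y q \<pi> \<longleftrightarrow> (\<forall>x\<ge>0. cut_balanced x)"
  unfolding cond2_def cut_balanced_def Let_def down_flux_def up_flux_def flux_def by simp

lemma outflow_finite: "outflow x < \<infinity>"
proof (cases "x \<in> Y")
  case False
  then show ?thesis
    unfolding outflow_def by (simp add: flux_eq_0 infsum_0)
next
  case True
  let ?S = "{\<omega>\<in>\<Omega>. x + \<omega> \<in> Y}"
  have "outflow x = (\<Sum>\<^sub>\<infinity>\<omega>\<in>?S. ennreal (q x (x + \<omega>) * \<pi> x))"
    unfolding outflow_def flux_def lam_def by (rule infsum_cong_neutral) (use True in auto)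
  also have "\<dots> = (\<Sum>\<^sub>\<infinity>z\<in>(\<lambda>\<omega>. x + \<omega>) ` ?S. ennreal (q x z * \<pi> x))"
    by (subst infsum_reindex) (auto simp: inj_on_def o_def)
  also have "\<dots> \<le> (\<Sum>\<^sub>\<infinity>z\<in>Y - {x}. ennreal (q x z * \<pi> x))"
    by (rule infsum_mono_neutral) (use zero_notin_Omega in auto)
  also have "\<dots> = ennreal (\<Sum>\<^sub>\<infinity>z\<in>Y - {x}. q x z * \<pi> x)"
    using rate_matrix True pi_nonneg
    by (intro infsum_ennreal_of_nonneg summable_on_cmult_left) (auto simp: is_rate_matrix_def)
  finally show ?thesis
    using order.strict_trans1 by fastforce
qed

lemma up_flux_shift:
  "up_flux (x + s) + (\<Sum>\<^sub>\<infinity>\<omega>\<in>\<Omega>pos. flux \<omega> (x - \<omega>)) = (\<Sum>\<^sub>\<infinity>\<omega>\<in>\<Omega>pos. flux \<omega> x) + up_flux x"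
proof -
  have "\<omega> \<in> \<Omega> \<and> 0 \<le> \<omega> div s" if "\<omega> \<in> \<Omega>pos" for \<omega>
    using that omega_star_pos by (auto simp: Omega_plus_def pos_imp_zdiv_nonneg_iff)
  then show ?thesis
    using infsum_band_shift[of \<Omega>pos "\<lambda>_. 0" "\<lambda>\<omega>. \<omega> div s" flux x s]
    by (simp add: up_flux_def div_omega_star_mult cong: infsum_cong)
qed

lemma down_flux_shift:
  "down_flux (x + s) + (\<Sum>\<^sub>\<infinity>\<omega>\<in>\<Omega>neg. flux \<omega> x) = (\<Sum>\<^sub>\<infinity>\<omega>\<in>\<Omega>neg. flux \<omega> (x - \<omega>)) + down_flux x"
proof -
  have "\<omega> \<in> \<Omega> \<and> \<omega> div s \<le> 0" if "\<omega> \<in> \<Omega>neg" for \<omega>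
    using that omega_star_pos by (auto simp: Omega_minus_def div_nonpos_pos_le0)
  then show ?thesis
    using infsum_band_shift[of \<Omega>neg "\<lambda>\<omega>. \<omega> div s" "\<lambda>_. 0" flux x s]
    by (simp add: down_flux_def div_omega_star_mult cong: infsum_cong)
qed

lemma cut_balanced_below_omega_star:
  assumes "x < s"
  shows "cut_balanced x"
proof -
  have "up_flux x = 0"
    unfolding up_flux_def
  proof (intro infsum_0)
    fix \<omega> j assume "j \<in> {1..\<omega> div s}"
    then have "1 * s \<le> j * s"
      using omega_star_pos by (intro mult_right_mono) auto
    then show "flux \<omega> (x - j * s) = 0"
      using assms by (intro flux_eq_0_neg) simp
  qed
  moreover have "down_flux x = 0"
    unfolding down_flux_def
  proof (intro infsum_0)
    fix \<omega> j assume "\<omega> \<in> \<Omega>neg" and j: "j \<in> {\<omega> div s + 1..0}"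
    then have "\<omega> = \<omega> div s * s"
      by (simp add: Omega_minus_def div_omega_star_mult)
    moreover have "1 * s \<le> (j - \<omega> div s) * s"
      using omega_star_pos j by (intro mult_right_mono) auto
    ultimately show "flux \<omega> (x - j * s) = 0"
      using assms by (intro flux_eq_0_neg) (simp add: algebra_simps)
  qed
  ultimately show ?thesis
    by (simp add: cut_balanced_def)
qed

lemma infsum_Omega_split:
  "(\<Sum>\<^sub>\<infinity>\<omega>\<in>\<Omega>. f \<omega>) = (\<Sum>\<^sub>\<infinity>\<omega>\<in>\<Omega>pos. f \<omega>) + (\<Sum>\<^sub>\<infinity>\<omega>\<in>\<Omega>neg. (f \<omega> :: ennreal))"
  by (subst Omega_plus_minus(1), rule infsum_Un_disjoint) (simp_all add: Omega_plus_minus(2))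

lemma balance_iff_cut_balanced_next:
  assumes "cut_balanced x"
  shows "inflow x = outflow x \<longleftrightarrow> cut_balanced (x + s)"
proof -
  let ?in_up = "\<Sum>\<^sub>\<infinity>\<omega>\<in>\<Omega>pos. flux \<omega> (x - \<omega>)" and ?in_down = "\<Sum>\<^sub>\<infinity>\<omega>\<in>\<Omega>neg. flux \<omega> (x - \<omega>)"
  let ?out_up = "\<Sum>\<^sub>\<infinity>\<omega>\<in>\<Omega>pos. flux \<omega> x" and ?out_down = "\<Sum>\<^sub>\<infinity>\<omega>\<in>\<Omega>neg. flux \<omega> x"
  have down: "down_flux (x + s) + ?out_down = ?in_down + up_flux x"
    using down_flux_shift assms by (simp add: cut_balanced_def)
  have finite: "?out_up + ?out_down < \<infinity>" "up_flux x < \<infinity>"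
    using outflow_finite[of x] assms by (simp_all add: outflow_def infsum_Omega_split cut_balanced_def)
  have "inflow x = outflow x \<longleftrightarrow> ?in_up + ?in_down = ?out_up + ?out_down"
    by (simp add: inflow_def outflow_def infsum_Omega_split)
  also have "\<dots> \<longleftrightarrow> cut_balanced (x + s)"
    unfolding cut_balanced_def by (rule ennreal_cut_balance[OF up_flux_shift down finite])
  finally show ?thesis .
qed

lemma balance_iff_cut_balanced: "(\<forall>x. inflow x = outflow x) \<longleftrightarrow> (\<forall>x. cut_balanced x)"
proof
  assume balance: "\<forall>x. inflow x = outflow x"
  show "\<forall>x. cut_balanced x"
  proof
    fix x
    show "cut_balanced x"
    proof (induction "nat x" arbitrary: x rule: less_induct)
      case less
      show ?case
      proof (cases "x < s")
        case False
        then have "cut_balanced (x - s)"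
          using omega_star_pos by (intro less) auto
        then show ?thesis
          using balance balance_iff_cut_balanced_next[of "x - s"] by simp
      qed (rule cut_balanced_below_omega_star)
    qed
  qed
next
  show "\<forall>x. cut_balanced x \<Longrightarrow> \<forall>x. inflow x = outflow x"
    using balance_iff_cut_balanced_next by blast
qed

lemma stationary_measure_iff_cond2: "stationary_measure Y q \<pi> \<longleftrightarrow> cond2 Y q \<pi>"
proof -
  have "cut_balanced x" if "\<forall>y\<ge>0. cut_balanced y" for x
  proof (cases "0 \<le> x")
    case False
    then show ?thesis
      using omega_star_pos by (intro cut_balanced_below_omega_star) simp
  qed (use that in blast)
  then have "(\<forall>x\<ge>0. cut_balanced x) \<longleftrightarrow> (\<forall>x. cut_balanced x)"
    by blast
  then show ?thesis
    unfolding stationary_measure_iff_balance balance_iff_cut_balanced cond2_iff_cut_balanced by (rule sym)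
qed

lemma omega_div_omega_star: "\<omega> \<in> \<Omega> \<Longrightarrow> real_of_int \<omega> / of_int s = of_int (\<omega> div s)"
  using omega_star_pos div_omega_star_mult[of \<omega>]
  by (metis of_int_0_less_iff of_int_mult nonzero_mult_div_cancel_right order_less_irrefl)

lemma ennreal_mult_eq_flux: "ennreal (\<pi> y) * ennreal (lam Y q \<omega> y) = flux \<omega> y"
  unfolding flux_def using pi_nonneg[of y] by (metis ennreal_mult' mult.commute)

lemma infsum_regroup_by_jump:
  assumes "\<And>j \<omega>. j \<in> J \<and> \<omega> \<in> A_set Y q j \<longleftrightarrow> \<omega> \<in> W \<and> j \<in> I \<omega>"
  shows "(\<Sum>\<^sub>\<infinity>j\<in>J. ennreal (\<pi> (x - j * s)) * (\<Sum>\<^sub>\<infinity>\<omega>\<in>A_set Y q j. ennreal (lam Y q \<omega> (x - j * s))))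
       = (\<Sum>\<^sub>\<infinity>\<omega>\<in>W. \<Sum>\<^sub>\<infinity>j\<in>I \<omega>. flux \<omega> (x - j * s))"
proof -
  have "(\<Sum>\<^sub>\<infinity>j\<in>J. ennreal (\<pi> (x - j * s)) * (\<Sum>\<^sub>\<infinity>\<omega>\<in>A_set Y q j. ennreal (lam Y q \<omega> (x - j * s))))
      = (\<Sum>\<^sub>\<infinity>j\<in>J. \<Sum>\<^sub>\<infinity>\<omega>\<in>A_set Y q j. flux \<omega> (x - j * s))"
    by (simp add: infsum_cmult_right_ennreal[symmetric] ennreal_mult_eq_flux)
  also have "\<dots> = (\<Sum>\<^sub>\<infinity>\<omega>\<in>W. \<Sum>\<^sub>\<infinity>j\<in>I \<omega>. flux \<omega> (x - j * s))"
    by (rule infsum_swap_dependent_ennreal) (rule assms)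
  finally show ?thesis .
qed

lemma up_jump_index_iff:
  "j \<in> {j. 1 \<le> j \<and> ereal (of_int j) \<le> omega_plus Y q} \<and> \<omega> \<in> A_set Y q j
     \<longleftrightarrow> \<omega> \<in> \<Omega>pos \<and> j \<in> {1..\<omega> div s}"
proof (cases "\<omega> \<in> \<Omega>pos \<and> 1 \<le> j")
  case True
  then have "\<omega> \<in> \<Omega>"
    by (simp add: Omega_plus_def)
  then have "j * s \<le> \<omega> \<longleftrightarrow> j \<le> \<omega> div s"
    using omega_star_pos div_omega_star_mult[of \<omega>] by (metis mult_le_cancel_right_pos)
  moreover have "ereal (of_int j) \<le> omega_plus Y q" if "j \<le> \<omega> div s"
  proof -
    have "ereal (of_int j) \<le> ereal (of_int \<omega> / of_int s)"
      using that omega_div_omega_star[OF \<open>\<omega> \<in> \<Omega>\<close>] by simp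
    also have "\<dots> \<le> omega_plus Y q"
      unfolding omega_plus_def using True by (intro SUP_upper) simp
    finally show ?thesis .
  qed
  ultimately show ?thesis
    using True by (auto simp: A_set_def)
qed (auto simp: A_set_def)

lemma down_jump_index_iff:
  "j \<in> {j. omega_minus Y q < ereal (of_int j) \<and> j \<le> 0} \<and> \<omega> \<in> A_set Y q j
     \<longleftrightarrow> \<omega> \<in> \<Omega>neg \<and> j \<in> {\<omega> div s + 1..0}"
proof (cases "\<omega> \<in> \<Omega>neg \<and> j \<le> 0")
  case True
  then have "\<omega> \<in> \<Omega>"
    by (simp add: Omega_minus_def)
  then have "\<omega> < j * s \<longleftrightarrow> \<omega> div s < j"
    using omega_star_pos div_omega_star_mult[of \<omega>] by (metis mult_less_cancel_right_pos)
  moreover have "omega_minus Y q < ereal (of_int j)" if "\<omega> div s < j"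
  proof -
    have "omega_minus Y q \<le> ereal (of_int \<omega> / of_int s)"
      unfolding omega_minus_def using True by (intro INF_lower) simp
    also have "\<dots> < ereal (of_int j)"
      using that omega_div_omega_star[OF \<open>\<omega> \<in> \<Omega>\<close>] by simp
    finally show ?thesis .
  qed
  ultimately show ?thesis
    using True by (auto simp: A_set_def)
qed (auto simp: A_set_def)

lemma cond2_iff_cond3: "cond2 Y q \<pi> \<longleftrightarrow> cond3 Y q \<pi>"
proof -
  have "(\<Sum>\<^sub>\<infinity>j\<in>{j. 1 \<le> j \<and> ereal (of_int j) \<le> omega_plus Y q}.
          ennreal (\<pi> (x - j * s)) * (\<Sum>\<^sub>\<infinity>\<omega>\<in>A_set Y q j. ennreal (lam Y q \<omega> (x - j * s))))
      = up_flux x" for x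
    unfolding up_flux_def by (rule infsum_regroup_by_jump) (rule up_jump_index_iff)
  moreover have "(\<Sum>\<^sub>\<infinity>j\<in>{j. omega_minus Y q < ereal (of_int j) \<and> j \<le> 0}.
          ennreal (\<pi> (x - j * s)) * (\<Sum>\<^sub>\<infinity>\<omega>\<in>A_set Y q j. ennreal (lam Y q \<omega> (x - j * s))))
      = down_flux x" for x
    unfolding down_flux_def by (rule infsum_regroup_by_jump) (rule down_jump_index_iff)
  ultimately show ?thesis
    unfolding cond2_iff_cut_balanced cut_balanced_def cond3_def Let_def by simp
qed

end

theorem theorem3p2:
  fixes Y :: "int set" and q :: "int \<Rightarrow> int \<Rightarrow> real" and \<pi> :: "int \<Rightarrow> real"
  assumes "Y \<subseteq> {0..}"
    and "is_rate_matrix Y q"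
    and "Omega Y q \<noteq> {}"
    and "\<forall>x. x \<notin> Y \<longrightarrow> \<pi> x = 0"
  shows "(stationary_measure Y q \<pi> \<longleftrightarrow> nonneg_measure_on Y \<pi> \<and> cond2 Y q \<pi>)
       \<and> (nonneg_measure_on Y \<pi> \<and> cond2 Y q \<pi> \<longleftrightarrow> nonneg_measure_on Y \<pi> \<and> cond3 Y q \<pi>)
       \<and> (stationary_distribution Y q \<pi> \<longleftrightarrow> prob_on Y \<pi> \<and> cond2 Y q \<pi>)
       \<and> (prob_on Y \<pi> \<and> cond2 Y q \<pi> \<longleftrightarrow> prob_on Y \<pi> \<and> cond3 Y q \<pi>)"
proof -
  have "stationary_measure Y q \<pi> \<longleftrightarrow> cond2 Y q \<pi>" "cond2 Y q \<pi> \<longleftrightarrow> cond3 Y q \<pi>"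
    if "nonneg_measure_on Y \<pi>"
  proof -
    interpret chain_measure Y q \<pi>
      using assms(1-3) that by unfold_locales
    show "stationary_measure Y q \<pi> \<longleftrightarrow> cond2 Y q \<pi>" by (rule stationary_measure_iff_cond2)
    show "cond2 Y q \<pi> \<longleftrightarrow> cond3 Y q \<pi>" by (rule cond2_iff_cond3)
  qed
  then show ?thesis
    unfolding stationary_distribution_def stationary_measure_def prob_on_def by blast
qed

end
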